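(* Let $Y\in\{0,1\}$, $T$, $H$ be random variables on a common probability space. For a random variable (or tuple) $X$, let $R^*(X):=\inf_g \Pr(g(X)\neq Y)$, the infimum over measurable $g$ with values in $\{0,1\}$. Then $$0\le R^*(T)-R^*(T,H)\le\sqrt{\tfrac12\,I(Y;H\mid T)},$$ where $I(Y;H\mid T)$ is the conditional mutual information between $Y$ and $H$ given $T$, measured in nats.
   Context: $R^*(T)$ and $R^*(T,H)$ are the Bayes-optimal 0–1 risks using the trace alone and the trace together with the history. *)

theory Defs
  imports "HOL-Probability.Probability"
begin

definition bayes_risk :: "'a measure \<Rightarrow> 'b measure \<Rightarrow> ('a \<Rightarrow> 'b) \<Rightarrow> ('a \<Rightarrow> bool) \<Rightarrow> real" where
  "bayes_risk M MX X Y =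
     (INF g \<in> MX \<rightarrow>\<^sub>M (count_space UNIV :: bool measure).
        measure M {\<omega> \<in> space M. g (X \<omega>) \<noteq> Y \<omega>})"

end

(*
  Write p(x) = P(Y = True | X = x) for the posterior of the label given an observation X.
  The Bayes risk is R*(X) = E[min(p, 1 - p)], attained by thresholding p at 1/2, and every
  classifier of T is also one of (T, H), whence R*(T) >= R*(T, H). Let q and p be the posteriors
  given (H, T) and given T. As x |-> min(x, 1 - x) is 1-Lipschitz,
    R*(T) - R*(T, H) <= E|q - p| <= sqrt (E (q - p)^2).
  On the other side I(Y; X) = E[phi(p)] - phi(P(Y = True)) with phi(x) = x ln x + (1 - x) ln (1 - x),
  so I(Y; H | T) = I(Y; (H, T)) - I(Y; T) = E[phi(q)] - E[phi(p)]. By the tower property E[phi(p)]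
  is also the cross entropy E[q ln p + (1 - q) ln (1 - p)], so I(Y; H | T) is the expected binary
  Kullback-Leibler divergence of q from p, and the binary Pinsker inequality
  2 (q - p)^2 <= KL(q, p) finishes the proof.
*)

theory Submission
  imports Defs
begin

definition bin_negentropy :: "real \<Rightarrow> real" where
  "bin_negentropy x = x * ln x + (1 - x) * ln (1 - x)"

definition bernoulli_weight :: "real \<Rightarrow> bool \<Rightarrow> real" where
  "bernoulli_weight p y = (if y then p else 1 - p)"

lemma bernoulli_weight_simps [simp]:
  "bernoulli_weight p True = p" "bernoulli_weight p False = 1 - p"
  by (simp_all add: bernoulli_weight_def)

lemma bernoulli_weight_nonneg: "0 \<le> p \<Longrightarrow> p \<le> 1 \<Longrightarrow> 0 \<le> bernoulli_weight p y"
  and bernoulli_weight_le_1: "0 \<le> p \<Longrightarrow> p \<le> 1 \<Longrightarrow> bernoulli_weight p y \<le> 1"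
  by (cases y; simp)+

lemma measurable_bernoulli_weight [measurable (raw)]:
  assumes [measurable]: "f \<in> borel_measurable N"
  shows "(\<lambda>x. bernoulli_weight (f x) y) \<in> borel_measurable N"
  by (cases y) (simp_all add: bernoulli_weight_def)

lemma measurable_bin_negentropy [measurable (raw)]:
  assumes [measurable]: "f \<in> borel_measurable N"
  shows "(\<lambda>x. bin_negentropy (f x)) \<in> borel_measurable N"
  unfolding bin_negentropy_def by measurable

lemma bin_negentropy_eq_sum:
  "bin_negentropy p = (\<Sum>y\<in>UNIV. bernoulli_weight p y * ln (bernoulli_weight p y))"
  by (simp add: bin_negentropy_def UNIV_bool add.commute)

lemma abs_mult_ln_le:
  fixes x K :: real
  assumes "0 \<le> x" "x \<le> K"
  shows "\<bar>x * ln x\<bar> \<le> K\<^sup>2 + 1"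
proof (cases "x \<le> 1")
  case True
  have "x - 1 \<le> x * ln x"
  proof (cases "x = 0")
    case False
    then have "1 - 1 / x \<le> ln x"
      using assms ln_le_minus_one[of "1 / x"] by (simp add: ln_div)
    then show ?thesis
      using assms False mult_left_mono[of "1 - 1 / x" "ln x" x] by (simp add: algebra_simps)
  qed simp
  moreover have "x * ln x \<le> 0"
    using assms True by (cases "x = 0") (auto simp: mult_nonneg_nonpos)
  ultimately have "\<bar>x * ln x\<bar> \<le> 1"
    using assms by linarith
  then show ?thesis
    using zero_le_power2[of K] by linarith
next
  case False
  then have "0 \<le> x * ln x" "x * ln x \<le> x * x"
    using ln_le_minus_one[of x] by (auto intro: mult_left_mono)
  moreover have "x * x \<le> K\<^sup>2"
    using assms by (simp add: power2_eq_square mult_mono)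
  ultimately show ?thesis by simp
qed

lemma abs_bernoulli_weight_mult_ln_le:
  "0 \<le> p \<Longrightarrow> p \<le> 1 \<Longrightarrow> \<bar>bernoulli_weight p y * ln (bernoulli_weight p y)\<bar> \<le> 2"
  using abs_mult_ln_le[of "bernoulli_weight p y" 1]
  by (simp add: bernoulli_weight_nonneg bernoulli_weight_le_1)

lemma abs_bin_negentropy_le: "0 \<le> p \<Longrightarrow> p \<le> 1 \<Longrightarrow> \<bar>bin_negentropy p\<bar> \<le> 4"
  using abs_bernoulli_weight_mult_ln_le[of p True] abs_bernoulli_weight_mult_ln_le[of p False]
  by (simp add: bin_negentropy_def)

lemma neg_ln_nonneg: "0 \<le> x \<Longrightarrow> x \<le> 1 \<Longrightarrow> 0 \<le> - ln (x :: real)"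
  by (cases "x = 0") auto

lemma mult_ln_divide:
  fixes p w :: real
  assumes "0 \<le> w" "0 \<le> p" "p = 0 \<Longrightarrow> w = 0"
  shows "w * ln (w / p) = w * ln w - w * ln p"
  using assms by (cases "w = 0") (auto simp: ln_div algebra_simps)

text \<open>As a function of b, the difference of the two sides vanishes at b = a and has derivative
  (b - a) (2 b - 1)^2 / (b (1 - b)), so it is minimal at b = a.\<close>
lemma binary_pinsker:
  fixes a b :: real
  assumes "0 \<le> a" "a \<le> 1" "0 < b" "b < 1"
  shows "2 * (a - b)\<^sup>2 \<le> bin_negentropy a - (a * ln b + (1 - a) * ln (1 - b))"
proof -
  define G where "G x = bin_negentropy a - a * ln x - (1 - a) * ln (1 - x) - 2 * (a - x)\<^sup>2" for x
  have G_deriv: "(G has_real_derivative (x - a) * (2 * x - 1)\<^sup>2 / (x * (1 - x))) (at x)"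
    if "0 < x" "x < 1" for x
    unfolding G_def using that
    by (auto intro!: derivative_eq_intros simp: divide_simps) (simp add: algebra_simps power2_eq_square)
  have G_cont: "continuous_on {l..u} G" if "0 \<le> l" "u \<le> 1" "a = 0 \<or> 0 < l" "a = 1 \<or> u < 1" for l u
  proof -
    have "continuous_on {l..u} (\<lambda>x. a * ln x)"
      using that by (cases "a = 0") (auto intro!: continuous_intros)
    moreover have "continuous_on {l..u} (\<lambda>x. (1 - a) * ln (1 - x))"
      using that by (cases "a = 1") (auto intro!: continuous_intros)
    ultimately show ?thesis
      unfolding G_def by (intro continuous_on_diff continuous_on_const) (auto intro!: continuous_intros)
  qed
  have "G a \<le> G b"
  proof (cases "a \<le> b")
    case True
    show ?thesis
    proof (rule DERIV_nonneg_imp_increasing_open[OF True _ G_cont])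
      fix x assume x: "a < x" "x < b"
      have "0 \<le> (x - a) * (2 * x - 1)\<^sup>2 / (x * (1 - x))"
        using x assms by (intro divide_nonneg_pos mult_nonneg_nonneg) auto
      then show "\<exists>y. (G has_real_derivative y) (at x) \<and> 0 \<le> y"
        using x assms G_deriv[of x] by auto
    qed (use assms in auto)
  next
    case False
    show ?thesis
    proof (rule DERIV_nonpos_imp_decreasing_open[of b a, OF _ _ G_cont])
      fix x assume x: "b < x" "x < a"
      have "(x - a) * (2 * x - 1)\<^sup>2 / (x * (1 - x)) \<le> 0"
        using x assms by (intro divide_nonpos_pos mult_nonpos_nonneg) auto
      then show "\<exists>y. (G has_real_derivative y) (at x) \<and> y \<le> 0"
        using x assms G_deriv[of x] by auto
    qed (use assms False in auto)
  qed
  moreover have "G a = 0"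
    by (simp add: G_def bin_negentropy_def)
  ultimately show ?thesis
    by (simp add: G_def)
qed

lemma ennreal_add_eq_1_split:
  fixes r s :: ennreal
  assumes "r + s = 1"
  shows "r = ennreal (min 1 (enn2real r))" and "s = ennreal (1 - min 1 (enn2real r))"
proof -
  have "r \<le> 1"
    using assms by (metis le_iff_add)
  then have "enn2real r \<le> 1" and "r \<noteq> \<top>"
    using enn2real_mono[of r 1] by (auto simp: top_unique)
  then show r_eq: "r = ennreal (min 1 (enn2real r))"
    by (simp add: less_top)
  show "s = ennreal (1 - min 1 (enn2real r))"
    using assms r_eq
    by (metis ennreal_1 ennreal_minus ennreal_add_diff_cancel_left ennreal_neq_top add.commute
        enn2real_nonneg min.boundedI zero_le_one)
qed

lemma (in prob_space) integral_abs_le_sqrt_integral_square: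
  fixes d :: "'a \<Rightarrow> real"
  assumes "d \<in> borel_measurable M" and "integrable M (\<lambda>x. (d x)\<^sup>2)"
  shows "(\<integral>x. \<bar>d x\<bar> \<partial>M) \<le> sqrt (\<integral>x. (d x)\<^sup>2 \<partial>M)"
proof (rule real_le_rsqrt)
  have "integrable M (\<lambda>x. \<bar>d x\<bar>)"
    using assms square_integrable_imp_integrable by blast
  then have "variance (\<lambda>x. \<bar>d x\<bar>) = (\<integral>x. (d x)\<^sup>2 \<partial>M) - (\<integral>x. \<bar>d x\<bar> \<partial>M)\<^sup>2"
    using assms by (simp add: variance_eq)
  then show "(\<integral>x. \<bar>d x\<bar> \<partial>M)\<^sup>2 \<le> (\<integral>x. (d x)\<^sup>2 \<partial>M)"
    using variance_positive[of "\<lambda>x. \<bar>d x\<bar>"] by simp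
qed

lemma absolutely_continuous_distr:
  assumes ac: "absolutely_continuous M N" and sets_eq: "sets N = sets M" and Z: "Z \<in> M \<rightarrow>\<^sub>M MZ"
  shows "absolutely_continuous (distr M MZ Z) (distr N MZ Z)"
  unfolding absolutely_continuous_def
proof
  fix A assume "A \<in> null_sets (distr M MZ Z)"
  then have A: "A \<in> sets MZ" and "Z -` A \<inter> space M \<in> null_sets M"
    using Z by (simp_all add: null_sets_distr_iff)
  then have "Z -` A \<inter> space N \<in> null_sets N"
    using ac unfolding absolutely_continuous_def sets_eq_imp_space_eq[OF sets_eq] by blast
  moreover have "Z \<in> N \<rightarrow>\<^sub>M MZ"
    using Z sets_eq by (simp cong: measurable_cong_sets)
  ultimately show "A \<in> null_sets (distr N MZ Z)"
    using A by (simp add: null_sets_distr_iff)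
qed

lemma bayes_risk_le:
  assumes "g \<in> MZ \<rightarrow>\<^sub>M (count_space UNIV :: bool measure)"
  shows "bayes_risk M MZ Z Y \<le> measure M {\<omega> \<in> space M. g (Z \<omega>) \<noteq> Y \<omega>}"
  unfolding bayes_risk_def
  by (rule cINF_lower[OF bdd_belowI[of _ 0] assms]) auto

lemma le_bayes_risk:
  assumes "\<And>g. g \<in> MZ \<rightarrow>\<^sub>M (count_space UNIV :: bool measure) \<Longrightarrow> c \<le> measure M {\<omega> \<in> space M. g (Z \<omega>) \<noteq> Y \<omega>}"
  shows "c \<le> bayes_risk M MZ Z Y"
  unfolding bayes_risk_def
proof (rule cINF_greatest)
  have "(\<lambda>_. True) \<in> MZ \<rightarrow>\<^sub>M (count_space UNIV :: bool measure)"
    by simp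
  then show "MZ \<rightarrow>\<^sub>M (count_space UNIV :: bool measure) \<noteq> {}"
    by blast
qed (rule assms)

lemma bayes_risk_mono:
  assumes "\<pi> \<in> MZ \<rightarrow>\<^sub>M MT" and "\<And>\<omega>. \<omega> \<in> space M \<Longrightarrow> \<pi> (Z \<omega>) = T \<omega>"
  shows "bayes_risk M MZ Z Y \<le> bayes_risk M MT T Y"
proof (rule le_bayes_risk)
  fix g :: "_ \<Rightarrow> bool" assume "g \<in> MT \<rightarrow>\<^sub>M count_space UNIV"
  then have "bayes_risk M MZ Z Y \<le> measure M {\<omega> \<in> space M. (g \<circ> \<pi>) (Z \<omega>) \<noteq> Y \<omega>}"
    by (intro bayes_risk_le measurable_comp[OF assms(1)])
  also have "\<dots> = measure M {\<omega> \<in> space M. g (T \<omega>) \<noteq> Y \<omega>}"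
    using assms(2) by (intro arg_cong[where f = "measure M"] Collect_cong) auto
  finally show "bayes_risk M MZ Z Y \<le> measure M {\<omega> \<in> space M. g (T \<omega>) \<noteq> Y \<omega>}" .
qed

locale binary_label = prob_space M for M :: "'a measure" +
  fixes Y :: "'a \<Rightarrow> bool"
  assumes measurable_label [measurable]: "Y \<in> M \<rightarrow>\<^sub>M count_space UNIV"
begin

definition label_prob :: "bool \<Rightarrow> real" where
  "label_prob y = prob {\<omega> \<in> space M. Y \<omega> = y}"

text \<open>a is a version of the posterior probability z \<mapsto> P(Y = True | Z = z): for each label y,
  the law of Z restricted to the event Y = y has density bernoulli_weight (a z) y with respect
  to the law of Z.\<close>
definition is_posterior :: "'z measure \<Rightarrow> ('a \<Rightarrow> 'z) \<Rightarrow> ('z \<Rightarrow> real) \<Rightarrow> bool" where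
  "is_posterior MZ Z a \<longleftrightarrow> Z \<in> M \<rightarrow>\<^sub>M MZ \<and> a \<in> borel_measurable MZ \<and> (\<forall>z \<in> space MZ. 0 \<le> a z \<and> a z \<le> 1) \<and>
     (\<forall>y. distr (density M (indicator {\<omega>. Y \<omega> = y})) MZ Z
            = density (distr M MZ Z) (\<lambda>z. ennreal (bernoulli_weight (a z) y)))"

lemma is_posteriorD:
  assumes "is_posterior MZ Z a"
  shows "Z \<in> M \<rightarrow>\<^sub>M MZ" and "a \<in> borel_measurable MZ"
    and "z \<in> space MZ \<Longrightarrow> 0 \<le> bernoulli_weight (a z) y"
    and "z \<in> space MZ \<Longrightarrow> bernoulli_weight (a z) y \<le> 1"
  using assms by (auto simp: is_posterior_def bernoulli_weight_nonneg bernoulli_weight_le_1)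

lemma nn_integral_posterior:
  assumes "is_posterior MZ Z a" and [measurable]: "\<And>y. f y \<in> borel_measurable MZ"
  shows "(\<integral>\<^sup>+\<omega>. f (Y \<omega>) (Z \<omega>) \<partial>M)
    = (\<integral>\<^sup>+z. (\<Sum>y\<in>UNIV. ennreal (bernoulli_weight (a z) y) * f y z) \<partial>distr M MZ Z)"
proof -
  note [measurable] = is_posteriorD(1,2)[OF assms(1)]
  have label_slice: "(\<integral>\<^sup>+\<omega>. indicator {\<omega>. Y \<omega> = y} \<omega> * f y (Z \<omega>) \<partial>M)
      = (\<integral>\<^sup>+z. ennreal (bernoulli_weight (a z) y) * f y z \<partial>distr M MZ Z)" for y
  proof -
    have "(\<integral>\<^sup>+\<omega>. indicator {\<omega>. Y \<omega> = y} \<omega> * f y (Z \<omega>) \<partial>M)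
        = (\<integral>\<^sup>+z. f y z \<partial>distr (density M (indicator {\<omega>. Y \<omega> = y})) MZ Z)"
      by (simp add: nn_integral_distr nn_integral_density)
    also have "\<dots> = (\<integral>\<^sup>+z. f y z \<partial>density (distr M MZ Z) (\<lambda>z. ennreal (bernoulli_weight (a z) y)))"
      using assms(1) by (simp add: is_posterior_def)
    also have "\<dots> = (\<integral>\<^sup>+z. ennreal (bernoulli_weight (a z) y) * f y z \<partial>distr M MZ Z)"
      by (simp add: nn_integral_density)
    finally show ?thesis .
  qed
  have "(\<integral>\<^sup>+\<omega>. f (Y \<omega>) (Z \<omega>) \<partial>M) = (\<integral>\<^sup>+\<omega>. (\<Sum>y\<in>UNIV. indicator {\<omega>. Y \<omega> = y} \<omega> * f y (Z \<omega>)) \<partial>M)"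
    by (intro nn_integral_cong) (simp add: UNIV_bool indicator_def)
  also have "\<dots> = (\<Sum>y\<in>UNIV. \<integral>\<^sup>+\<omega>. indicator {\<omega>. Y \<omega> = y} \<omega> * f y (Z \<omega>) \<partial>M)"
    by (rule nn_integral_sum) simp
  also have "\<dots> = (\<integral>\<^sup>+z. (\<Sum>y\<in>UNIV. ennreal (bernoulli_weight (a z) y) * f y z) \<partial>distr M MZ Z)"
    unfolding label_slice by (rule nn_integral_sum[symmetric]) simp
  finally show ?thesis .
qed

lemma emeasure_distr_label_slices:
  assumes [measurable]: "Z \<in> M \<rightarrow>\<^sub>M MZ" "A \<in> sets MZ"
  shows "(\<Sum>y\<in>UNIV. emeasure (distr (density M (indicator {\<omega>. Y \<omega> = y})) MZ Z) A) = emeasure (distr M MZ Z) A"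
proof -
  have "(\<Sum>y\<in>UNIV. emeasure (distr (density M (indicator {\<omega>. Y \<omega> = y})) MZ Z) A)
      = (\<Sum>y\<in>UNIV. \<integral>\<^sup>+\<omega>\<in>Z -` A \<inter> space M. indicator {\<omega>. Y \<omega> = y} \<omega> \<partial>M)"
    by (simp add: emeasure_distr emeasure_density)
  also have "\<dots> = (\<integral>\<^sup>+\<omega>\<in>Z -` A \<inter> space M. 1 \<partial>M)"
    by (subst nn_integral_sum[symmetric]) (auto intro!: nn_integral_cong simp: UNIV_bool indicator_def)
  also have "\<dots> = emeasure (distr M MZ Z) A"
    by (simp add: emeasure_distr)
  finally show ?thesis .
qed

lemma posterior_exists:
  assumes [measurable]: "Z \<in> M \<rightarrow>\<^sub>M MZ"
  obtains a where "is_posterior MZ Z a"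
proof -
  define PZ where "PZ = distr M MZ Z"
  define \<nu> where "\<nu> y = distr (density M (indicator {\<omega>. Y \<omega> = y})) MZ Z" for y
  interpret PZ: prob_space PZ
    unfolding PZ_def by (rule prob_space_distr) simp
  have sets_PZ [measurable_cong]: "sets PZ = sets MZ"
    by (simp add: PZ_def)
  define r where "r y = RN_deriv PZ (\<nu> y)" for y
  have [measurable]: "r y \<in> borel_measurable MZ" for y
    unfolding r_def using borel_measurable_RN_deriv[of PZ "\<nu> y"] by (simp add: measurable_def)
  have density_r: "density PZ (r y) = \<nu> y" for y
    unfolding r_def
  proof (rule PZ.density_RN_deriv)
    show "absolutely_continuous PZ (\<nu> y)"
      unfolding PZ_def \<nu>_def
      by (intro absolutely_continuous_distr absolutely_continuousI_density) simp_all
  qed (simp add: \<nu>_def PZ_def)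
  have "density PZ (\<lambda>z. r True z + r False z) = density PZ (\<lambda>_. 1)"
  proof (rule measure_eqI)
    fix A assume "A \<in> sets (density PZ (\<lambda>z. r True z + r False z))"
    then have [measurable]: "A \<in> sets MZ"
      by (simp add: sets_PZ)
    have "emeasure (density PZ (\<lambda>z. r True z + r False z)) A = (\<Sum>y\<in>UNIV. emeasure (\<nu> y) A)"
      by (simp add: UNIV_bool emeasure_density nn_integral_add distrib_right density_r[symmetric])
    also have "\<dots> = emeasure (density PZ (\<lambda>_. 1)) A"
      unfolding \<nu>_def by (simp add: emeasure_distr_label_slices density_1 PZ_def)
    finally show "emeasure (density PZ (\<lambda>z. r True z + r False z)) A = emeasure (density PZ (\<lambda>_. 1)) A" .
  qed simp
  then have AE_sum: "AE z in PZ. r True z + r False z = 1"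
    by (subst (asm) PZ.density_unique_iff) simp_all
  \<comment> \<open>the clipping by min only matters on a null set; it keeps a within [0, 1] everywhere\<close>
  define a where "a z = min 1 (enn2real (r True z))" for z
  have a_measurable: "a \<in> borel_measurable MZ"
    unfolding a_def by measurable
  have r_eq: "r y z = ennreal (bernoulli_weight (a z) y)" if "r True z + r False z = 1" for y z
    unfolding a_def by (cases y) (simp_all only: bernoulli_weight_simps ennreal_add_eq_1_split[OF that, symmetric])
  have AE_r: "AE z in PZ. ennreal (bernoulli_weight (a z) y) = r y z" for y
    using AE_sum by eventually_elim (rule r_eq[symmetric])
  have "is_posterior MZ Z a"
    unfolding is_posterior_def
  proof (intro conjI ballI allI)
    fix y
    have "density PZ (\<lambda>z. ennreal (bernoulli_weight (a z) y)) = density PZ (r y)"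
      using AE_r[of y] by (rule density_cong[rotated 2]) (simp_all add: a_def)
    then show "distr (density M (indicator {\<omega>. Y \<omega> = y})) MZ Z
        = density (distr M MZ Z) (\<lambda>z. ennreal (bernoulli_weight (a z) y))"
      using density_r[of y] unfolding PZ_def \<nu>_def by simp
  qed (auto simp: a_def a_measurable)
  then show thesis ..
qed

lemma nn_integral_posterior_real:
  assumes "is_posterior MZ Z a" and [measurable]: "\<And>y. f y \<in> borel_measurable MZ"
    and nonneg: "\<And>y z. z \<in> space MZ \<Longrightarrow> 0 \<le> f y z"
  shows "(\<integral>\<^sup>+\<omega>. ennreal (f (Y \<omega>) (Z \<omega>)) \<partial>M)
    = (\<integral>\<^sup>+z. ennreal (\<Sum>y\<in>UNIV. bernoulli_weight (a z) y * f y z) \<partial>distr M MZ Z)"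
proof -
  have "(\<integral>\<^sup>+\<omega>. ennreal (f (Y \<omega>) (Z \<omega>)) \<partial>M)
      = (\<integral>\<^sup>+z. (\<Sum>y\<in>UNIV. ennreal (bernoulli_weight (a z) y) * ennreal (f y z)) \<partial>distr M MZ Z)"
    by (rule nn_integral_posterior[OF assms(1)]) simp
  also have "\<dots> = (\<integral>\<^sup>+z. ennreal (\<Sum>y\<in>UNIV. bernoulli_weight (a z) y * f y z) \<partial>distr M MZ Z)"
    using is_posteriorD(1,3)[OF assms(1)] nonneg
    by (intro nn_integral_cong) (simp add: ennreal_mult[symmetric] sum_ennreal[symmetric] del: sum_ennreal)
  finally show ?thesis .
qed

lemma integral_posterior:
  assumes "is_posterior MZ Z a" and [measurable]: "\<And>y. f y \<in> borel_measurable MZ"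
    and nonneg: "\<And>y z. z \<in> space MZ \<Longrightarrow> 0 \<le> f y z"
  shows "(\<integral>\<omega>. f (Y \<omega>) (Z \<omega>) \<partial>M) = (\<integral>z. (\<Sum>y\<in>UNIV. bernoulli_weight (a z) y * f y z) \<partial>distr M MZ Z)"
proof -
  note [measurable] = is_posteriorD(1,2)[OF assms(1)]
  have "(\<integral>\<omega>. f (Y \<omega>) (Z \<omega>) \<partial>M) = enn2real (\<integral>\<^sup>+\<omega>. ennreal (f (Y \<omega>) (Z \<omega>)) \<partial>M)"
    using measurable_space[OF is_posteriorD(1)[OF assms(1)]]
    by (intro integral_eq_nn_integral AE_I2) (simp_all add: nonneg)
  also have "\<dots> = enn2real (\<integral>\<^sup>+z. ennreal (\<Sum>y\<in>UNIV. bernoulli_weight (a z) y * f y z) \<partial>distr M MZ Z)"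
    using nn_integral_posterior_real[where f = f, OF assms] by simp
  also have "\<dots> = (\<integral>z. (\<Sum>y\<in>UNIV. bernoulli_weight (a z) y * f y z) \<partial>distr M MZ Z)"
    using is_posteriorD(3)[OF assms(1)] nonneg
    by (intro integral_eq_nn_integral[symmetric] AE_I2) (auto intro!: sum_nonneg)
  finally show ?thesis .
qed

lemma integrable_posterior_iff:
  assumes "is_posterior MZ Z a" and [measurable]: "\<And>y. f y \<in> borel_measurable MZ"
    and nonneg: "\<And>y z. z \<in> space MZ \<Longrightarrow> 0 \<le> f y z"
  shows "integrable M (\<lambda>\<omega>. f (Y \<omega>) (Z \<omega>))
    \<longleftrightarrow> integrable (distr M MZ Z) (\<lambda>z. \<Sum>y\<in>UNIV. bernoulli_weight (a z) y * f y z)"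
proof -
  note [measurable] = is_posteriorD(1,2)[OF assms(1)]
  have "(\<integral>\<^sup>+\<omega>. ennreal (norm (f (Y \<omega>) (Z \<omega>))) \<partial>M) = (\<integral>\<^sup>+\<omega>. ennreal (f (Y \<omega>) (Z \<omega>)) \<partial>M)"
    using measurable_space[OF is_posteriorD(1)[OF assms(1)]] by (intro nn_integral_cong) (simp add: nonneg)
  moreover have "(\<integral>\<^sup>+z. ennreal (norm (\<Sum>y\<in>UNIV. bernoulli_weight (a z) y * f y z)) \<partial>distr M MZ Z)
      = (\<integral>\<^sup>+z. ennreal (\<Sum>y\<in>UNIV. bernoulli_weight (a z) y * f y z) \<partial>distr M MZ Z)"
    using is_posteriorD(3)[OF assms(1)] nonneg
    by (intro nn_integral_cong) (simp add: abs_of_nonneg sum_nonneg)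
  ultimately show ?thesis
    using nn_integral_posterior_real[where f = f, OF assms] by (simp add: integrable_iff_bounded)
qed

lemma label_prob_eq: "label_prob y = bernoulli_weight (label_prob True) y"
proof (cases y)
  case False
  have "{\<omega> \<in> space M. Y \<omega> = False} = space M - {\<omega> \<in> space M. Y \<omega> = True}"
    by auto
  then show ?thesis
    using False by (simp add: label_prob_def prob_compl)
qed simp

lemma integral_label: "(\<integral>\<omega>. f (Y \<omega>) \<partial>M) = (\<Sum>y\<in>UNIV. label_prob y * f y)"
proof -
  have "(\<integral>\<omega>. f (Y \<omega>) \<partial>M) = (\<integral>\<omega>. (\<Sum>y\<in>UNIV. indicator {\<omega> \<in> space M. Y \<omega> = y} \<omega> * f y) \<partial>M)"
    by (intro Bochner_Integration.integral_cong) (auto simp: UNIV_bool indicator_def)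
  also have "\<dots> = (\<Sum>y\<in>UNIV. label_prob y * f y)"
    by (subst Bochner_Integration.integral_sum)
       (auto simp: label_prob_def emeasure_eq_measure intro!: integrable_real_indicator)
  finally show ?thesis .
qed

lemma nn_integral_label: "(\<integral>\<^sup>+\<omega>. f (Y \<omega>) \<partial>M) = (\<Sum>y\<in>UNIV. ennreal (label_prob y) * f y)"
proof -
  have "(\<integral>\<^sup>+\<omega>. f (Y \<omega>) \<partial>M) = (\<integral>\<^sup>+\<omega>. (\<Sum>y\<in>UNIV. f y * indicator {\<omega> \<in> space M. Y \<omega> = y} \<omega>) \<partial>M)"
    by (intro nn_integral_cong) (auto simp: UNIV_bool indicator_def)
  also have "\<dots> = (\<Sum>y\<in>UNIV. ennreal (label_prob y) * f y)"
    by (subst nn_integral_sum) (simp_all add: nn_integral_cmult_indicator label_prob_def emeasure_eq_measure mult.commute)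
  finally show ?thesis .
qed

lemma nn_integral_posterior_weight:
  assumes "is_posterior MZ Z a"
  shows "(\<integral>\<^sup>+z. ennreal (bernoulli_weight (a z) y) \<partial>distr M MZ Z) = ennreal (label_prob y)"
proof -
  have "(\<integral>\<^sup>+z. ennreal (bernoulli_weight (a z) y) \<partial>distr M MZ Z)
      = (\<integral>\<^sup>+\<omega>. ennreal (if Y \<omega> = y then 1 else 0) \<partial>M)"
    by (subst nn_integral_posterior_real[OF assms, where f = "\<lambda>y' z. if y' = y then 1 else 0"])
       (simp_all add: UNIV_bool)
  also have "\<dots> = (\<integral>\<^sup>+\<omega>. indicator {\<omega> \<in> space M. Y \<omega> = y} \<omega> \<partial>M)"
    by (intro nn_integral_cong) (simp add: indicator_def)
  also have "\<dots> = emeasure M {\<omega> \<in> space M. Y \<omega> = y}"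
    by (rule nn_integral_indicator) simp
  finally show ?thesis
    by (simp add: label_prob_def emeasure_eq_measure)
qed

lemma integral_posterior_weight:
  assumes "is_posterior MZ Z a"
  shows "(\<integral>z. bernoulli_weight (a z) y \<partial>distr M MZ Z) = label_prob y"
  using is_posteriorD[OF assms] nn_integral_posterior_weight[OF assms]
  by (subst integral_eq_nn_integral) (auto intro!: AE_I2 simp: label_prob_def)

lemma AE_posterior_weight_eq_0:
  assumes "is_posterior MZ Z a"
  shows "AE z in distr M MZ Z. \<forall>y. label_prob y = 0 \<longrightarrow> bernoulli_weight (a z) y = 0"
  unfolding AE_all_countable
proof
  fix y
  note [measurable] = is_posteriorD(1,2)[OF assms]
  show "AE z in distr M MZ Z. label_prob y = 0 \<longrightarrow> bernoulli_weight (a z) y = 0"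
  proof (cases "label_prob y = 0")
    case True
    then have "(\<integral>\<^sup>+z. ennreal (bernoulli_weight (a z) y) \<partial>distr M MZ Z) = 0"
      using nn_integral_posterior_weight[OF assms, of y] by simp
    then have "AE z in distr M MZ Z. ennreal (bernoulli_weight (a z) y) = 0"
      by (simp add: nn_integral_0_iff_AE)
    moreover have "AE z in distr M MZ Z. z \<in> space MZ"
      using AE_space[of "distr M MZ Z"] by simp
    ultimately show ?thesis
      by eventually_elim (metis ennreal_eq_0_iff is_posteriorD(3)[OF assms] order_antisym)
  qed simp
qed

lemma error_prob_eq_posterior:
  assumes "is_posterior MZ Z a" and [measurable]: "g \<in> MZ \<rightarrow>\<^sub>M (count_space UNIV :: bool measure)"
  shows "measure M {\<omega> \<in> space M. g (Z \<omega>) \<noteq> Y \<omega>} = (\<integral>z. bernoulli_weight (a z) (\<not> g z) \<partial>distr M MZ Z)"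
proof -
  note [measurable] = is_posteriorD(1,2)[OF assms(1)]
  have "measure M {\<omega> \<in> space M. g (Z \<omega>) \<noteq> Y \<omega>} = (\<integral>\<omega>. indicator {\<omega> \<in> space M. g (Z \<omega>) \<noteq> Y \<omega>} \<omega> \<partial>M)"
    by simp
  also have "\<dots> = (\<integral>\<omega>. (if g (Z \<omega>) \<noteq> Y \<omega> then 1 else 0) \<partial>M)"
    by (intro Bochner_Integration.integral_cong) (auto simp: indicator_def)
  also have "\<dots> = (\<integral>z. bernoulli_weight (a z) (\<not> g z) \<partial>distr M MZ Z)"
    by (subst integral_posterior[OF assms(1), where f = "\<lambda>y z. if g z \<noteq> y then 1 else 0"])
       (auto simp: UNIV_bool bernoulli_weight_def intro!: Bochner_Integration.integral_cong)
  finally show ?thesis .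
qed

lemma bayes_risk_eq_posterior:
  assumes "is_posterior MZ Z a"
  shows "bayes_risk M MZ Z Y = (\<integral>z. min (a z) (1 - a z) \<partial>distr M MZ Z)"
proof (rule antisym)
  note [measurable] = is_posteriorD(1,2)[OF assms]
  interpret PZ: prob_space "distr M MZ Z"
    by (rule prob_space_distr) simp
  have weight_bounds: "0 \<le> bernoulli_weight (a z) y" "bernoulli_weight (a z) y \<le> 1" if "z \<in> space MZ" for z y
    using is_posteriorD(3,4)[OF assms that] by auto
  have integrable_weight: "integrable (distr M MZ Z) (\<lambda>z. bernoulli_weight (a z) (h z))"
    if [measurable]: "h \<in> MZ \<rightarrow>\<^sub>M count_space UNIV" for h
    by (rule PZ.integrable_const_bound[where B = 1]) (auto intro!: AE_I2 simp: weight_bounds abs_of_nonneg)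
  have min_eq: "min (a z) (1 - a z) = bernoulli_weight (a z) (\<not> (1 / 2 < a z))" for z
    by (auto simp: bernoulli_weight_def min_def)
  have "bayes_risk M MZ Z Y \<le> measure M {\<omega> \<in> space M. (1 / 2 < a (Z \<omega>)) \<noteq> Y \<omega>}"
    by (rule bayes_risk_le) measurable
  also have "\<dots> = (\<integral>z. bernoulli_weight (a z) (\<not> 1 / 2 < a z) \<partial>distr M MZ Z)"
    by (rule error_prob_eq_posterior[OF assms]) measurable
  finally show "bayes_risk M MZ Z Y \<le> (\<integral>z. min (a z) (1 - a z) \<partial>distr M MZ Z)"
    by (simp only: min_eq)
  show "(\<integral>z. min (a z) (1 - a z) \<partial>distr M MZ Z) \<le> bayes_risk M MZ Z Y"
  proof (rule le_bayes_risk)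
    fix g :: "_ \<Rightarrow> bool" assume g [measurable]: "g \<in> MZ \<rightarrow>\<^sub>M count_space UNIV"
    have "(\<integral>z. min (a z) (1 - a z) \<partial>distr M MZ Z) \<le> (\<integral>z. bernoulli_weight (a z) (\<not> g z) \<partial>distr M MZ Z)"
      unfolding min_eq
      by (intro integral_mono integrable_weight) (auto simp: bernoulli_weight_def)
    then show "(\<integral>z. min (a z) (1 - a z) \<partial>distr M MZ Z) \<le> measure M {\<omega> \<in> space M. g (Z \<omega>) \<noteq> Y \<omega>}"
      unfolding error_prob_eq_posterior[OF assms g] .
  qed
qed

lemma posterior_ratio_bounds:
  assumes "is_posterior MZ Z a" and "z \<in> space MZ"
  shows "0 \<le> bernoulli_weight (a z) y / label_prob y"
    and "bernoulli_weight (a z) y / label_prob y \<le> (\<Sum>y\<in>UNIV. 1 / label_prob y)"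
proof -
  have label_prob_nonneg: "0 \<le> label_prob y" for y
    by (simp add: label_prob_def)
  then show "0 \<le> bernoulli_weight (a z) y / label_prob y"
    using is_posteriorD(3)[OF assms] by simp
  have "bernoulli_weight (a z) y / label_prob y \<le> 1 / label_prob y"
    using is_posteriorD(4)[OF assms] label_prob_nonneg by (simp add: divide_right_mono)
  also have "\<dots> \<le> (\<Sum>y\<in>UNIV. 1 / label_prob y)"
    using label_prob_nonneg by (intro member_le_sum) simp_all
  finally show "bernoulli_weight (a z) y / label_prob y \<le> (\<Sum>y\<in>UNIV. 1 / label_prob y)" .
qed

text \<open>If label_prob y = 0, the density is 0 by x / 0 = 0; this is harmless since then
  bernoulli_weight (a z) y vanishes almost everywhere.\<close>
lemma joint_distr_eq_density:
  assumes "is_posterior MZ Z a"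
  shows "distr M (count_space UNIV \<Otimes>\<^sub>M MZ) (\<lambda>\<omega>. (Y \<omega>, Z \<omega>))
    = density (distr M (count_space UNIV) Y \<Otimes>\<^sub>M distr M MZ Z)
        (\<lambda>(y, z). ennreal (bernoulli_weight (a z) y / label_prob y))"
    (is "_ = density (?PY \<Otimes>\<^sub>M ?PZ) ?q")
proof (rule measure_eqI)
  note [measurable] = is_posteriorD(1,2)[OF assms]
  interpret PZ: prob_space ?PZ
    by (rule prob_space_distr) simp
  interpret PY: prob_space ?PY
    by (rule prob_space_distr) simp
  interpret pair_sigma_finite ?PY ?PZ ..
  have sets_product [measurable_cong]: "sets (?PY \<Otimes>\<^sub>M ?PZ) = sets (count_space UNIV \<Otimes>\<^sub>M MZ)"
    by (intro sets_pair_measure_cong) simp_all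
  then show "sets (distr M (count_space UNIV \<Otimes>\<^sub>M MZ) (\<lambda>\<omega>. (Y \<omega>, Z \<omega>))) = sets (density (?PY \<Otimes>\<^sub>M ?PZ) ?q)"
    by simp
  have [measurable]: "?q \<in> borel_measurable (count_space UNIV \<Otimes>\<^sub>M MZ)"
    by (rule measurable_pair_measure_countable1) simp_all
  fix C assume "C \<in> sets (distr M (count_space UNIV \<Otimes>\<^sub>M MZ) (\<lambda>\<omega>. (Y \<omega>, Z \<omega>)))"
  then have [measurable]: "C \<in> sets (count_space UNIV \<Otimes>\<^sub>M MZ)"
    by simp
  have weight_eq: "AE z in ?PZ. \<forall>y. ennreal (label_prob y) * ?q (y, z) = ennreal (bernoulli_weight (a z) y)"
    using AE_posterior_weight_eq_0[OF assms] AE_space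
  proof eventually_elim
    case (elim z)
    then show ?case
      using posterior_ratio_bounds[OF assms]
      by (auto simp: ennreal_mult'[symmetric] label_prob_def)
  qed
  have "emeasure (density (?PY \<Otimes>\<^sub>M ?PZ) ?q) C = (\<integral>\<^sup>+z. \<integral>\<^sup>+y. ?q (y, z) * indicator C (y, z) \<partial>?PY \<partial>?PZ)"
    by (simp add: emeasure_density nn_integral_snd[symmetric] nn_integral_set_ennreal)
  also have "\<dots> = (\<integral>\<^sup>+z. (\<Sum>y\<in>UNIV. ennreal (label_prob y) * (?q (y, z) * indicator C (y, z))) \<partial>?PZ)"
  proof (intro nn_integral_cong)
    fix z
    show "(\<integral>\<^sup>+y. ?q (y, z) * indicator C (y, z) \<partial>?PY)
        = (\<Sum>y\<in>UNIV. ennreal (label_prob y) * (?q (y, z) * indicator C (y, z)))"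
      by (subst nn_integral_distr) (simp_all, rule nn_integral_label)
  qed
  also have "\<dots> = (\<integral>\<^sup>+z. (\<Sum>y\<in>UNIV. ennreal (bernoulli_weight (a z) y) * indicator C (y, z)) \<partial>?PZ)"
    by (rule nn_integral_cong_AE, use weight_eq in eventually_elim) (simp add: mult.assoc[symmetric])
  also have "\<dots> = (\<integral>\<^sup>+\<omega>. indicator C (Y \<omega>, Z \<omega>) \<partial>M)"
    by (rule nn_integral_posterior[OF assms, symmetric]) simp
  also have "\<dots> = (\<integral>\<^sup>+\<omega>. indicator ((\<lambda>\<omega>. (Y \<omega>, Z \<omega>)) -` C \<inter> space M) \<omega> \<partial>M)"
    by (intro nn_integral_cong) (simp add: indicator_def)
  also have "\<dots> = emeasure (distr M (count_space UNIV \<Otimes>\<^sub>M MZ) (\<lambda>\<omega>. (Y \<omega>, Z \<omega>))) C"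
    by (simp add: emeasure_distr)
  finally show "emeasure (distr M (count_space UNIV \<Otimes>\<^sub>M MZ) (\<lambda>\<omega>. (Y \<omega>, Z \<omega>))) C
      = emeasure (density (?PY \<Otimes>\<^sub>M ?PZ) ?q) C" ..
qed

lemma mutual_information_eq_expected_KL:
  assumes "is_posterior MZ Z a"
  shows "mutual_information (exp 1) (count_space UNIV) MZ Y Z
    = (\<integral>z. (\<Sum>y\<in>UNIV. bernoulli_weight (a z) y * ln (bernoulli_weight (a z) y / label_prob y)) \<partial>distr M MZ Z)"
proof -
  note [measurable] = is_posteriorD(1,2)[OF assms]
  define PY where "PY = distr M (count_space UNIV) Y"
  define PZ where "PZ = distr M MZ Z"
  interpret PY: prob_space PY
    unfolding PY_def by (rule prob_space_distr) simp
  interpret PZ: prob_space PZ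
    unfolding PZ_def by (rule prob_space_distr) simp
  interpret PYZ: pair_prob_space PY PZ ..
  have sets_PZ [measurable_cong]: "sets PZ = sets MZ" and space_PZ [simp]: "space PZ = space MZ"
    by (simp_all add: PZ_def)
  have sets_product [measurable_cong]: "sets (PY \<Otimes>\<^sub>M PZ) = sets (count_space UNIV \<Otimes>\<^sub>M MZ)"
    by (intro sets_pair_measure_cong) (simp_all add: PY_def PZ_def)
  define q where "q = (\<lambda>(y, z). bernoulli_weight (a z) y / label_prob y)"
  have [measurable]: "q \<in> borel_measurable (count_space UNIV \<Otimes>\<^sub>M MZ)"
    unfolding q_def by (rule measurable_pair_measure_countable1) simp_all
  define K where "K = (\<Sum>y\<in>UNIV. 1 / label_prob y)"
  have q_bounds: "0 \<le> q (y, z)" "q (y, z) \<le> K" if "z \<in> space MZ" for y z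
    using posterior_ratio_bounds[OF assms that] by (simp_all add: q_def K_def)
  have "integrable (PY \<Otimes>\<^sub>M PZ) (\<lambda>x. q x * ln (q x))"
    using q_bounds abs_mult_ln_le
    by (intro PYZ.P.integrable_const_bound[where B = "K\<^sup>2 + 1"] AE_I2) (auto simp: space_pair_measure PY_def)
  then have fubini: "integrable PZ (\<lambda>z. \<integral>y. q (y, z) * ln (q (y, z)) \<partial>PY)"
      "(\<integral>z. \<integral>y. q (y, z) * ln (q (y, z)) \<partial>PY \<partial>PZ) = (\<integral>x. q x * ln (q x) \<partial>(PY \<Otimes>\<^sub>M PZ))"
    using PYZ.integrable_snd[of "\<lambda>y z. q (y, z) * ln (q (y, z))"] PYZ.integral_snd[of "\<lambda>y z. q (y, z) * ln (q (y, z))"]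
    by (simp_all add: case_prod_eta[of "\<lambda>x. q x * ln (q x)"])
  have "mutual_information (exp 1) (count_space UNIV) MZ Y Z
      = KL_divergence (exp 1) (PY \<Otimes>\<^sub>M PZ) (density (PY \<Otimes>\<^sub>M PZ) (\<lambda>x. ennreal (q x)))"
    unfolding mutual_information_def joint_distr_eq_density[OF assms]
    by (simp add: PY_def PZ_def q_def split_beta')
  also have "\<dots> = (\<integral>x. q x * ln (q x) \<partial>(PY \<Otimes>\<^sub>M PZ))"
    by (subst PYZ.P.KL_density) (auto intro!: AE_I2 q_bounds simp: space_pair_measure log_def)
  also have "\<dots> = (\<integral>z. \<integral>y. q (y, z) * ln (q (y, z)) \<partial>PY \<partial>PZ)"
    by (rule fubini(2)[symmetric])
  also have "\<dots> = (\<integral>z. (\<Sum>y\<in>UNIV. bernoulli_weight (a z) y * ln (bernoulli_weight (a z) y / label_prob y)) \<partial>PZ)"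
  proof (rule integral_cong_AE)
    show "AE z in PZ. (\<integral>y. q (y, z) * ln (q (y, z)) \<partial>PY)
        = (\<Sum>y\<in>UNIV. bernoulli_weight (a z) y * ln (bernoulli_weight (a z) y / label_prob y))"
      using AE_posterior_weight_eq_0[OF assms] unfolding PZ_def[symmetric]
    proof eventually_elim
      case (elim z)
      have "(\<integral>y. q (y, z) * ln (q (y, z)) \<partial>PY) = (\<Sum>y\<in>UNIV. label_prob y * (q (y, z) * ln (q (y, z))))"
        unfolding PY_def by (subst integral_distr) (simp_all, rule integral_label)
      also have "\<dots> = (\<Sum>y\<in>UNIV. bernoulli_weight (a z) y * ln (bernoulli_weight (a z) y / label_prob y))"
        using elim by (intro sum.cong refl) (auto simp: q_def)
      finally show ?case .
    qed
  qed (use fubini(1) borel_measurable_integrable in simp_all)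
  finally show ?thesis
    by (simp add: PZ_def)
qed

lemma mutual_information_eq_posterior:
  assumes "is_posterior MZ Z a"
  shows "mutual_information (exp 1) (count_space UNIV) MZ Y Z
    = (\<integral>z. bin_negentropy (a z) \<partial>distr M MZ Z) - bin_negentropy (label_prob True)"
proof -
  note [measurable] = is_posteriorD(1,2)[OF assms]
  interpret PZ: prob_space "distr M MZ Z"
    by (rule prob_space_distr) simp
  have "AE z in distr M MZ Z. (\<Sum>y\<in>UNIV. bernoulli_weight (a z) y * ln (bernoulli_weight (a z) y / label_prob y))
      = bin_negentropy (a z) - (\<Sum>y\<in>UNIV. bernoulli_weight (a z) y * ln (label_prob y))"
    using AE_posterior_weight_eq_0[OF assms] AE_space
  proof eventually_elim
    case (elim z)
    then show ?case
      using is_posteriorD(3)[OF assms] by (simp add: bin_negentropy_eq_sum mult_ln_divide label_prob_def sum_subtractf)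
  qed
  then have "mutual_information (exp 1) (count_space UNIV) MZ Y Z
      = (\<integral>z. bin_negentropy (a z) - (\<Sum>y\<in>UNIV. bernoulli_weight (a z) y * ln (label_prob y)) \<partial>distr M MZ Z)"
    unfolding mutual_information_eq_expected_KL[OF assms] by (rule integral_cong_AE[rotated 2]) simp_all
  also have "\<dots> = (\<integral>z. bin_negentropy (a z) \<partial>distr M MZ Z) - (\<Sum>y\<in>UNIV. label_prob y * ln (label_prob y))"
  proof -
    have "integrable (distr M MZ Z) (\<lambda>z. bin_negentropy (a z))"
      using is_posteriorD(3,4)[OF assms, of _ True]
      by (intro PZ.integrable_const_bound[where B = 4] AE_I2) (auto intro!: abs_bin_negentropy_le)
    moreover have "integrable (distr M MZ Z) (\<lambda>z. bernoulli_weight (a z) y * ln (label_prob y))" for y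
      using is_posteriorD(3,4)[OF assms]
      by (intro integrable_mult_left PZ.integrable_const_bound[where B = 1] AE_I2) (auto simp: abs_of_nonneg)
    ultimately show ?thesis
      using integral_posterior_weight[OF assms] by simp
  qed
  also have "(\<Sum>y\<in>UNIV. label_prob y * ln (label_prob y)) = bin_negentropy (label_prob True)"
    unfolding bin_negentropy_eq_sum by (simp only: label_prob_eq[symmetric])
  finally show ?thesis .
qed

context
  fixes MZ :: "'z measure" and Z a and MT :: "'t measure" and T b and \<pi> :: "'z \<Rightarrow> 't"
  assumes posterior_Z: "is_posterior MZ Z a" and posterior_T: "is_posterior MT T b"
    and measurable_\<pi> [measurable]: "\<pi> \<in> MZ \<rightarrow>\<^sub>M MT"
    and \<pi>_Z: "\<And>\<omega>. \<omega> \<in> space M \<Longrightarrow> \<pi> (Z \<omega>) = T \<omega>"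
begin

lemma
  assumes [measurable]: "\<And>y. f y \<in> borel_measurable MT" and nonneg: "\<And>y t. t \<in> space MT \<Longrightarrow> 0 \<le> f y t"
  shows nn_integral_posterior_coarsening:
      "(\<integral>\<^sup>+z. ennreal (\<Sum>y\<in>UNIV. bernoulli_weight (a z) y * f y (\<pi> z)) \<partial>distr M MZ Z)
        = (\<integral>\<^sup>+t. ennreal (\<Sum>y\<in>UNIV. bernoulli_weight (b t) y * f y t) \<partial>distr M MT T)"
    and integrable_posterior_coarsening_iff:
      "integrable (distr M MZ Z) (\<lambda>z. \<Sum>y\<in>UNIV. bernoulli_weight (a z) y * f y (\<pi> z))
        \<longleftrightarrow> integrable (distr M MT T) (\<lambda>t. \<Sum>y\<in>UNIV. bernoulli_weight (b t) y * f y t)"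
    and integral_posterior_coarsening:
      "(\<integral>z. (\<Sum>y\<in>UNIV. bernoulli_weight (a z) y * f y (\<pi> z)) \<partial>distr M MZ Z)
        = (\<integral>t. (\<Sum>y\<in>UNIV. bernoulli_weight (b t) y * f y t) \<partial>distr M MT T)"
proof -
  have nonneg_\<pi>: "0 \<le> f y (\<pi> z)" if "z \<in> space MZ" for y z
    using nonneg measurable_space[OF measurable_\<pi> that] by simp
  show "(\<integral>\<^sup>+z. ennreal (\<Sum>y\<in>UNIV. bernoulli_weight (a z) y * f y (\<pi> z)) \<partial>distr M MZ Z)
        = (\<integral>\<^sup>+t. ennreal (\<Sum>y\<in>UNIV. bernoulli_weight (b t) y * f y t) \<partial>distr M MT T)"
    using nn_integral_posterior_real[OF posterior_Z, where f = "\<lambda>y z. f y (\<pi> z)"]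
      nn_integral_posterior_real[OF posterior_T, where f = f] nonneg_\<pi> nonneg
    by (simp add: \<pi>_Z cong: nn_integral_cong_simp)
  show "integrable (distr M MZ Z) (\<lambda>z. \<Sum>y\<in>UNIV. bernoulli_weight (a z) y * f y (\<pi> z))
        \<longleftrightarrow> integrable (distr M MT T) (\<lambda>t. \<Sum>y\<in>UNIV. bernoulli_weight (b t) y * f y t)"
  proof -
    have "integrable M (\<lambda>\<omega>. f (Y \<omega>) (\<pi> (Z \<omega>))) \<longleftrightarrow> integrable M (\<lambda>\<omega>. f (Y \<omega>) (T \<omega>))"
      by (rule Bochner_Integration.integrable_cong) (simp_all add: \<pi>_Z)
    then show ?thesis
      using integrable_posterior_iff[OF posterior_Z, where f = "\<lambda>y z. f y (\<pi> z)"]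
        integrable_posterior_iff[OF posterior_T, where f = f] nonneg_\<pi> nonneg
      by simp
  qed
  show "(\<integral>z. (\<Sum>y\<in>UNIV. bernoulli_weight (a z) y * f y (\<pi> z)) \<partial>distr M MZ Z)
        = (\<integral>t. (\<Sum>y\<in>UNIV. bernoulli_weight (b t) y * f y t) \<partial>distr M MT T)"
  proof -
    have "(\<integral>\<omega>. f (Y \<omega>) (\<pi> (Z \<omega>)) \<partial>M) = (\<integral>\<omega>. f (Y \<omega>) (T \<omega>) \<partial>M)"
      by (rule Bochner_Integration.integral_cong) (simp_all add: \<pi>_Z)
    then show ?thesis
      using integral_posterior[OF posterior_Z, where f = "\<lambda>y z. f y (\<pi> z)"]
        integral_posterior[OF posterior_T, where f = f] nonneg_\<pi> nonneg
      by simp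
  qed
qed

lemma AE_posterior_weight_eq_0_coarsening:
  "AE z in distr M MZ Z. \<forall>y. bernoulli_weight (b (\<pi> z)) y = 0 \<longrightarrow> bernoulli_weight (a z) y = 0"
proof -
  note [measurable] = is_posteriorD(1,2)[OF posterior_Z] is_posteriorD(1,2)[OF posterior_T]
  define f where "f y t = (if bernoulli_weight (b t) y = 0 then 1 else 0 :: real)" for y t
  have [measurable]: "f y \<in> borel_measurable MT" for y
    unfolding f_def by measurable
  have "(\<Sum>y\<in>UNIV. bernoulli_weight (b t) y * f y t) = 0" for t
    by (intro sum.neutral) (simp add: f_def)
  then have "(\<integral>\<^sup>+z. ennreal (\<Sum>y\<in>UNIV. bernoulli_weight (a z) y * f y (\<pi> z)) \<partial>distr M MZ Z) = 0"
    by (subst nn_integral_posterior_coarsening) (simp_all add: f_def)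
  then have "AE z in distr M MZ Z. ennreal (\<Sum>y\<in>UNIV. bernoulli_weight (a z) y * f y (\<pi> z)) = 0"
    by (simp add: nn_integral_0_iff_AE)
  moreover have "AE z in distr M MZ Z. z \<in> space MZ"
    using AE_space[of "distr M MZ Z"] by simp
  ultimately show ?thesis
  proof eventually_elim
    case (elim z)
    have terms: "0 \<le> bernoulli_weight (a z) y * f y (\<pi> z)" for y
      using is_posteriorD(3)[OF posterior_Z elim(2)] by (simp add: f_def)
    then have "0 \<le> (\<Sum>y\<in>UNIV. bernoulli_weight (a z) y * f y (\<pi> z))"
      by (intro sum_nonneg)
    with elim(1) have "(\<Sum>y\<in>UNIV. bernoulli_weight (a z) y * f y (\<pi> z)) = 0"
      by (simp add: ennreal_eq_0_iff)
    then have vanish: "bernoulli_weight (a z) y * f y (\<pi> z) = 0" for y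
      using terms by (simp add: sum_nonneg_eq_0_iff)
    show ?case
    proof (intro allI impI)
      fix y assume "bernoulli_weight (b (\<pi> z)) y = 0"
      then show "bernoulli_weight (a z) y = 0"
        using vanish[of y] by (simp add: f_def)
    qed
  qed
qed

lemma
  shows integrable_cross_entropy_coarsening:
      "integrable (distr M MZ Z) (\<lambda>z. \<Sum>y\<in>UNIV. bernoulli_weight (a z) y * - ln (bernoulli_weight (b (\<pi> z)) y))"
    and integral_cross_entropy_coarsening:
      "(\<integral>z. (\<Sum>y\<in>UNIV. bernoulli_weight (a z) y * - ln (bernoulli_weight (b (\<pi> z)) y)) \<partial>distr M MZ Z)
        = - (\<integral>t. bin_negentropy (b t) \<partial>distr M MT T)"
proof -
  note [measurable] = is_posteriorD(1,2)[OF posterior_T]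
  interpret PT: prob_space "distr M MT T"
    by (rule prob_space_distr) simp
  have entropy_eq: "(\<Sum>y\<in>UNIV. bernoulli_weight (b t) y * - ln (bernoulli_weight (b t) y)) = - bin_negentropy (b t)" for t
    by (simp add: bin_negentropy_eq_sum sum_negf)
  have nonneg: "0 \<le> - ln (bernoulli_weight (b t) y)" if "t \<in> space MT" for t y
    using is_posteriorD(3,4)[OF posterior_T that] by (rule neg_ln_nonneg)
  have "integrable (distr M MT T) (\<lambda>t. - bin_negentropy (b t))"
    using is_posteriorD(3,4)[OF posterior_T, of _ True]
    by (intro PT.integrable_const_bound[where B = 4] AE_I2) (auto intro!: abs_bin_negentropy_le)
  moreover have "(\<lambda>t. - ln (bernoulli_weight (b t) y)) \<in> borel_measurable MT" for y
    by measurable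
  note coarsening =
    integrable_posterior_coarsening_iff[where f = "\<lambda>y t. - ln (bernoulli_weight (b t) y)", OF this nonneg]
    integral_posterior_coarsening[where f = "\<lambda>y t. - ln (bernoulli_weight (b t) y)", OF this nonneg]
  ultimately show "integrable (distr M MZ Z) (\<lambda>z. \<Sum>y\<in>UNIV. bernoulli_weight (a z) y * - ln (bernoulli_weight (b (\<pi> z)) y))"
    by (simp only: coarsening entropy_eq)
  show "(\<integral>z. (\<Sum>y\<in>UNIV. bernoulli_weight (a z) y * - ln (bernoulli_weight (b (\<pi> z)) y)) \<partial>distr M MZ Z)
      = - (\<integral>t. bin_negentropy (b t) \<partial>distr M MT T)"
    by (simp only: coarsening entropy_eq integral_minus)
qed

lemma posterior_bounds_coarsening:
  assumes "z \<in> space MZ"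
  shows "0 \<le> a z" "a z \<le> 1" "0 \<le> b (\<pi> z)" "b (\<pi> z) \<le> 1"
  using is_posteriorD(3,4)[OF posterior_Z assms, of True]
    is_posteriorD(3,4)[OF posterior_T measurable_space[OF measurable_\<pi> assms], of True]
  by simp_all

lemma AE_binary_pinsker_coarsening:
  "AE z in distr M MZ Z. 2 * (a z - b (\<pi> z))\<^sup>2
    \<le> bin_negentropy (a z) + (\<Sum>y\<in>UNIV. bernoulli_weight (a z) y * - ln (bernoulli_weight (b (\<pi> z)) y))"
  using AE_posterior_weight_eq_0_coarsening AE_space[of "distr M MZ Z"]
proof eventually_elim
  case (elim z)
  then have z: "z \<in> space MZ"
    by simp
  consider "b (\<pi> z) = 0" | "b (\<pi> z) = 1" | "0 < b (\<pi> z)" "b (\<pi> z) < 1"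
    using posterior_bounds_coarsening[OF z] by fastforce
  then show ?case
  proof cases
    case 1
    then have "a z = 0"
      using elim(1)[rule_format, of True] by simp
    then show ?thesis
      using 1 by (simp add: bin_negentropy_def UNIV_bool)
  next
    case 2
    then have "a z = 1"
      using elim(1)[rule_format, of False] by simp
    then show ?thesis
      using 2 by (simp add: bin_negentropy_def UNIV_bool)
  next
    case 3
    then show ?thesis
      using binary_pinsker[OF posterior_bounds_coarsening(1,2)[OF z] 3] by (simp add: UNIV_bool)
  qed
qed

lemma integral_sq_posterior_diff_le:
  "(\<integral>z. (a z - b (\<pi> z))\<^sup>2 \<partial>distr M MZ Z)
    \<le> 1 / 2 * ((\<integral>z. bin_negentropy (a z) \<partial>distr M MZ Z) - (\<integral>t. bin_negentropy (b t) \<partial>distr M MT T))"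
proof -
  note [measurable] = is_posteriorD(1,2)[OF posterior_Z] is_posteriorD(1,2)[OF posterior_T]
  interpret PZ: prob_space "distr M MZ Z"
    by (rule prob_space_distr) simp
  define CE where "CE z = (\<Sum>y\<in>UNIV. bernoulli_weight (a z) y * - ln (bernoulli_weight (b (\<pi> z)) y))" for z
  have integrable_negentropy: "integrable (distr M MZ Z) (\<lambda>z. bin_negentropy (a z))"
    using posterior_bounds_coarsening
    by (intro PZ.integrable_const_bound[where B = 4] AE_I2) (auto intro!: abs_bin_negentropy_le)
  have integrable_CE: "integrable (distr M MZ Z) CE"
    unfolding CE_def by (rule integrable_cross_entropy_coarsening)
  have integrable_sq: "integrable (distr M MZ Z) (\<lambda>z. 2 * (a z - b (\<pi> z))\<^sup>2)"
  proof (intro PZ.integrable_const_bound[where B = 2] AE_I2)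
    fix z assume "z \<in> space (distr M MZ Z)"
    then have "\<bar>a z - b (\<pi> z)\<bar> \<le> 1"
      using posterior_bounds_coarsening[of z] by auto
    then show "norm (2 * (a z - b (\<pi> z))\<^sup>2) \<le> 2"
      by (simp add: abs_square_le_1)
  qed simp
  have "(\<integral>z. 2 * (a z - b (\<pi> z))\<^sup>2 \<partial>distr M MZ Z) \<le> (\<integral>z. bin_negentropy (a z) + CE z \<partial>distr M MZ Z)"
    using integrable_sq Bochner_Integration.integrable_add[OF integrable_negentropy integrable_CE]
      AE_binary_pinsker_coarsening[folded CE_def]
    by (rule integral_mono_AE)
  also have "\<dots> = (\<integral>z. bin_negentropy (a z) \<partial>distr M MZ Z) + (\<integral>z. CE z \<partial>distr M MZ Z)"
    using integrable_negentropy integrable_CE by (rule Bochner_Integration.integral_add)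
  finally show ?thesis
    unfolding CE_def integral_cross_entropy_coarsening by simp
qed

lemma risk_gap_le:
  "(\<integral>t. min (b t) (1 - b t) \<partial>distr M MT T) - (\<integral>z. min (a z) (1 - a z) \<partial>distr M MZ Z)
    \<le> sqrt (1 / 2 * ((\<integral>z. bin_negentropy (a z) \<partial>distr M MZ Z) - (\<integral>t. bin_negentropy (b t) \<partial>distr M MT T)))"
proof -
  note [measurable] = is_posteriorD(1,2)[OF posterior_Z] is_posteriorD(1,2)[OF posterior_T]
  interpret PZ: prob_space "distr M MZ Z"
    by (rule prob_space_distr) simp
  have bounded: "\<bar>min (a z) (1 - a z)\<bar> \<le> 1" "\<bar>min (b (\<pi> z)) (1 - b (\<pi> z))\<bar> \<le> 1" "\<bar>a z - b (\<pi> z)\<bar> \<le> 1"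
    if "z \<in> space MZ" for z
    using posterior_bounds_coarsening[OF that] by auto
  have integrable_min_a: "integrable (distr M MZ Z) (\<lambda>z. min (a z) (1 - a z))"
    and integrable_min_b: "integrable (distr M MZ Z) (\<lambda>z. min (b (\<pi> z)) (1 - b (\<pi> z)))"
    and integrable_abs_diff: "integrable (distr M MZ Z) (\<lambda>z. \<bar>a z - b (\<pi> z)\<bar>)"
    by (intro PZ.integrable_const_bound[where B = 1] AE_I2; simp add: bounded)+
  have "distr M MT T = distr (distr M MZ Z) MT \<pi>"
    by (subst distr_distr) (auto intro!: distr_cong simp: \<pi>_Z)
  then have "(\<integral>t. min (b t) (1 - b t) \<partial>distr M MT T) = (\<integral>z. min (b (\<pi> z)) (1 - b (\<pi> z)) \<partial>distr M MZ Z)"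
    by (simp add: integral_distr)
  also have "\<dots> - (\<integral>z. min (a z) (1 - a z) \<partial>distr M MZ Z)
      = (\<integral>z. min (b (\<pi> z)) (1 - b (\<pi> z)) - min (a z) (1 - a z) \<partial>distr M MZ Z)"
    using integrable_min_b integrable_min_a by (rule Bochner_Integration.integral_diff[symmetric])
  also have "\<dots> \<le> (\<integral>z. \<bar>a z - b (\<pi> z)\<bar> \<partial>distr M MZ Z)"
    using Bochner_Integration.integrable_diff[OF integrable_min_b integrable_min_a] integrable_abs_diff
    by (rule integral_mono) (auto simp: min_def abs_if)
  also have "\<dots> \<le> sqrt (\<integral>z. (a z - b (\<pi> z))\<^sup>2 \<partial>distr M MZ Z)"
    by (intro PZ.integral_abs_le_sqrt_integral_square PZ.integrable_const_bound[where B = 1] AE_I2)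
       (simp_all add: bounded abs_square_le_1)
  also have "\<dots> \<le> sqrt (1 / 2 * ((\<integral>z. bin_negentropy (a z) \<partial>distr M MZ Z) - (\<integral>t. bin_negentropy (b t) \<partial>distr M MT T)))"
    using integral_sq_posterior_diff_le by (rule real_sqrt_le_mono)
  finally show ?thesis .
qed

end

end

theorem mainTheorem4:
  fixes M :: "'a measure" and MT :: "'t measure" and MH :: "'h measure"
    and Y :: "'a \<Rightarrow> bool" and T :: "'a \<Rightarrow> 't" and H :: "'a \<Rightarrow> 'h"
  assumes "prob_space M"
    and "Y \<in> M \<rightarrow>\<^sub>M (count_space UNIV :: bool measure)"
    and "T \<in> M \<rightarrow>\<^sub>M MT"
    and "H \<in> M \<rightarrow>\<^sub>M MH"
  shows "0 \<le> bayes_risk M MT T Y - bayes_risk M (MT \<Otimes>\<^sub>M MH) (\<lambda>\<omega>. (T \<omega>, H \<omega>)) Y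
    \<and> bayes_risk M MT T Y - bayes_risk M (MT \<Otimes>\<^sub>M MH) (\<lambda>\<omega>. (T \<omega>, H \<omega>)) Y
        \<le> sqrt (1/2 * prob_space.conditional_mutual_information M (exp 1)
                 (count_space UNIV :: bool measure) MH MT Y H T)"
proof -
  interpret binary_label M Y
    using assms(1,2) by (simp add: binary_label_def binary_label_axioms_def)
  note [measurable] = assms(3,4)
  have "(\<lambda>\<omega>. (H \<omega>, T \<omega>)) \<in> M \<rightarrow>\<^sub>M MH \<Otimes>\<^sub>M MT"
    by measurable
  then obtain a where posterior_HT: "is_posterior (MH \<Otimes>\<^sub>M MT) (\<lambda>\<omega>. (H \<omega>, T \<omega>)) a"
    by (rule posterior_exists)
  obtain b where posterior_T: "is_posterior MT T b"
    using assms(3) by (rule posterior_exists)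
  \<comment> \<open>conditional_mutual_information pairs the observations as (H, T), the risk as (T, H)\<close>
  have risk_swap: "bayes_risk M (MT \<Otimes>\<^sub>M MH) (\<lambda>\<omega>. (T \<omega>, H \<omega>)) Y = bayes_risk M (MH \<Otimes>\<^sub>M MT) (\<lambda>\<omega>. (H \<omega>, T \<omega>)) Y"
    by (intro antisym bayes_risk_mono[where \<pi> = "\<lambda>(x, y). (y, x)"]) simp_all
  have "bayes_risk M (MT \<Otimes>\<^sub>M MH) (\<lambda>\<omega>. (T \<omega>, H \<omega>)) Y \<le> bayes_risk M MT T Y"
    by (rule bayes_risk_mono[where \<pi> = fst]) simp_all
  moreover have "conditional_mutual_information (exp 1) (count_space UNIV) MH MT Y H T
      = (\<integral>z. bin_negentropy (a z) \<partial>distr M (MH \<Otimes>\<^sub>M MT) (\<lambda>\<omega>. (H \<omega>, T \<omega>)))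
        - (\<integral>t. bin_negentropy (b t) \<partial>distr M MT T)"
    by (simp add: conditional_mutual_information_def mutual_information_eq_posterior[OF posterior_HT]
        mutual_information_eq_posterior[OF posterior_T])
  moreover note risk_gap_le[OF posterior_HT posterior_T measurable_snd]
  ultimately show ?thesis
    by (simp add: risk_swap bayes_risk_eq_posterior[OF posterior_HT] bayes_risk_eq_posterior[OF posterior_T])
qed

end
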